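(* Let $k\ge1$ and $\mathbf m=(m_0,\dots,m_{2k})\in\mathbb Z^{2k+1}$. Then $$P_{2k-1}(x,\mathbf m)=x^{k-1}\sum_{j=0}^{k}\Big(\sum_{A\in I(2k-1,2j-1)}\prod_{i\in A}m_i\Big)x^j$$ and $$P_{2k}(x,\mathbf m)=x^{k}\sum_{j=0}^{k}\Big(\sum_{A\in I(2k,2j)}\prod_{i\in A}m_i\Big)x^j.$$
   Context: For $\mathbf m=(m_0,\dots,m_K)\in\mathbb Z^{K+1}$ the polynomials $P_\ell(x,\mathbf m),Q_\ell(x,\mathbf m)\in\mathbb Z[x]$, $0\le\ell\le K$, are defined by $P_0(x,\mathbf m)=m_0$, $Q_0(x,\mathbf m)=1$ and, for $1\le\ell\le K$, $P_\ell(x,\mathbf m)=m_\ell\,x\,P_{\ell-1}(x,\mathbf m)+Q_{\ell-1}(x,\mathbf m)$, $Q_\ell(x,\mathbf m)=x\,P_{\ell-1}(x,\mathbf m)$. For integers $h\ge0$ and $j\ge-1$, $I(h,j)$ denotes the set of subsets $\{a_0,\dots,a_j\}$ of $\{0,\dots,h\}$ (with $j+1$ elements) such that $a_0<\dots<a_j$ and $a_i\equiv i\pmod 2$ for every $i=0,\dots,j$; in particular $I(h,-1)=\{\emptyset\}$, and the empty product equals $1$. *)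

theory Defs
  imports "HOL-Computational_Algebra.Polynomial"
begin

(* PQ m l = (P_l(x,m), Q_l(x,m)); only the entries m 0, ..., m l are used *)
fun PQ :: "(nat \<Rightarrow> int) \<Rightarrow> nat \<Rightarrow> int poly \<times> int poly" where
  "PQ m 0 = ([:m 0:], 1)"
| "PQ m (Suc l) = (let (P, Q) = PQ m l in
     (smult (m (Suc l)) ([:0, 1:] * P) + Q, [:0, 1:] * P))"

definition Ppoly :: "nat \<Rightarrow> (nat \<Rightarrow> int) \<Rightarrow> int poly" where
  "Ppoly l m = fst (PQ m l)"

definition Qpoly :: "nat \<Rightarrow> (nat \<Rightarrow> int) \<Rightarrow> int poly" where
  "Qpoly l m = snd (PQ m l)"

definition Iset :: "nat \<Rightarrow> int \<Rightarrow> nat set set" where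
  "Iset h j = {A. A \<subseteq> {0..h} \<and> int (card A) = j + 1 \<and>
      (\<forall>i < card A. sorted_list_of_set A ! i mod 2 = i mod 2)}"

end

theory Submission
  imports Defs
begin

(* The coefficient of x^n in P_l is the sum over I(l, 2n - l) and that in Q_l the sum over
   I(l, 2n - l - 1). This is proved by induction on l: a set in I(l+1, j) either avoids l+1,
   or it is B \<union> {l+1} with B in I(l, j-1), which is possible only when l+1 and j have the
   same parity, and the recurrence P_{l+1} = m_{l+1} x P_l + Q_l, Q_{l+1} = x P_l performs
   exactly this splitting. The theorem is a reindexing of these coefficients: outside the
   displayed range the index 2n - l lies outside [-1, l], where I(l, _) is empty. *)

definition alternating :: "nat set \<Rightarrow> bool" where
  "alternating A \<longleftrightarrow> (\<forall>i < card A. sorted_list_of_set A ! i mod 2 = i mod 2)"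

lemma mem_Iset_iff:
  "A \<in> Iset h j \<longleftrightarrow> A \<subseteq> {0..h} \<and> int (card A) = j + 1 \<and> alternating A"
  by (simp add: Iset_def alternating_def)

lemma sorted_list_of_set_insert_greater:
  assumes "finite B" "\<forall>b\<in>B. b < (x::nat)"
  shows "sorted_list_of_set (insert x B) = sorted_list_of_set B @ [x]"
proof -
  have "x \<notin> B" using assms(2) by blast
  then have "sorted_list_of_set (insert x B) = insort x (sorted_list_of_set B)"
    using assms(1) by simp
  also have "\<dots> = sorted_list_of_set B @ [x]"
    using assms by (intro sorted_insort_is_snoc) auto
  finally show ?thesis .
qed

lemma alternating_insert_greater:
  assumes "finite B" "\<forall>b\<in>B. b < (x::nat)"
  shows "alternating (insert x B) \<longleftrightarrow> alternating B \<and> x mod 2 = card B mod 2"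
proof -
  have "x \<notin> B" using assms(2) by blast
  then have "card (insert x B) = Suc (card B)" using assms(1) by simp
  then show ?thesis
    using sorted_list_of_set_insert_greater[OF assms]
    by (simp add: alternating_def less_Suc_eq nth_append) blast
qed

lemma finite_Iset: "finite (Iset h j)"
  by (rule finite_subset[of _ "Pow {0..h}"]) (auto simp: Iset_def)

lemma Iset_eq_empty:
  assumes "j < -1 \<or> j > int h"
  shows "Iset h j = {}"
proof (rule equals0I)
  fix A assume "A \<in> Iset h j"
  then have "A \<subseteq> {0..h}" and card_A: "int (card A) = j + 1"
    by (simp_all add: mem_Iset_iff)
  then have "card A \<le> Suc h" using card_mono[of "{0..h}" A] by simp
  then show False using card_A assms by linarith
qed

lemma Iset_0: "Iset 0 j = (if j = -1 then {{}} else if j = 0 then {{0}} else {})"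
proof -
  have mem: "A \<in> Iset 0 j \<longleftrightarrow> A = {} \<and> j = -1 \<or> A = {0} \<and> j = 0" for A j
  proof -
    consider "A = {}" | "A = {0}" | "\<not> A \<subseteq> {0..0}" by fastforce
    then show ?thesis by cases (auto simp: mem_Iset_iff alternating_def)
  qed
  show ?thesis by (auto simp: mem)
qed

lemma Iset_Suc:
  "Iset (Suc h) j = Iset h j \<union>
     (if int (Suc h) mod 2 = j mod 2 then insert (Suc h) ` Iset h (j - 1) else {})"
  (is "_ = Iset h j \<union> ?extended")
proof -
  have insert_iff: "insert (Suc h) B \<in> Iset (Suc h) j \<longleftrightarrow>
      B \<in> Iset h (j - 1) \<and> int (Suc h) mod 2 = j mod 2" if B: "B \<subseteq> {0..h}" for B
  proof -
    have "finite B" "\<forall>b\<in>B. b < Suc h" using B finite_subset by auto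
    then have "card (insert (Suc h) B) = Suc (card B)" by auto
    moreover have "int (card B) = j \<Longrightarrow>
        Suc h mod 2 = card B mod 2 \<longleftrightarrow> int (Suc h) mod 2 = j mod 2"
      by (metis of_nat_eq_iff zmod_int of_nat_numeral)
    ultimately show ?thesis
      using B alternating_insert_greater[OF \<open>finite B\<close> \<open>\<forall>b\<in>B. b < Suc h\<close>]
      by (auto simp: mem_Iset_iff)
  qed
  have below_iff: "A \<in> Iset (Suc h) j \<longleftrightarrow> A \<in> Iset h j" if "Suc h \<notin> A" for A
    using that by (auto simp: mem_Iset_iff le_Suc_eq)
  show ?thesis
  proof (intro set_eqI iffI)
    fix A assume A: "A \<in> Iset (Suc h) j"
    show "A \<in> Iset h j \<union> ?extended"
    proof (cases "Suc h \<in> A")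
      case True
      define B where "B = A - {Suc h}"
      have AB: "A = insert (Suc h) B" using True by (auto simp: B_def)
      have "B \<subseteq> {0..h}" using A by (auto simp: B_def mem_Iset_iff le_Suc_eq)
      with A AB insert_iff have "B \<in> Iset h (j - 1)" "int (Suc h) mod 2 = j mod 2"
        by simp_all
      then show ?thesis using AB by simp
    qed (use A below_iff in auto)
  next
    fix A assume A: "A \<in> Iset h j \<union> ?extended"
    then show "A \<in> Iset (Suc h) j"
    proof (cases "A \<in> Iset h j")
      case False
      with A obtain B where "A = insert (Suc h) B" "B \<in> Iset h (j - 1)"
          "int (Suc h) mod 2 = j mod 2"
        by (auto split: if_splits)
      then show ?thesis using insert_iff by (simp add: mem_Iset_iff)
    qed (auto simp: below_iff mem_Iset_iff)
  qed
qed

definition Iset_sum :: "(nat \<Rightarrow> int) \<Rightarrow> nat \<Rightarrow> int \<Rightarrow> int" where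
  "Iset_sum m h j = (\<Sum>A \<in> Iset h j. \<Prod>i\<in>A. m i)"

lemma Iset_sum_eq_0: "j < -1 \<or> j > int h \<Longrightarrow> Iset_sum m h j = 0"
  by (simp add: Iset_sum_def Iset_eq_empty)

lemma Iset_sum_0: "Iset_sum m 0 j = (if j = -1 then 1 else if j = 0 then m 0 else 0)"
  by (simp add: Iset_sum_def Iset_0)

lemma Iset_sum_Suc:
  "Iset_sum m (Suc h) j =
     Iset_sum m h j + (if int (Suc h) mod 2 = j mod 2 then m (Suc h) * Iset_sum m h (j - 1) else 0)"
proof -
  have fresh: "finite B \<and> Suc h \<notin> B" if "B \<in> Iset h i" for B i
    using that finite_subset[of B "{0..h}"] by (auto simp: mem_Iset_iff)
  have "inj_on (insert (Suc h)) (Iset h (j - 1))"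
    by (rule inj_onI) (metis fresh insert_ident)
  then have "(\<Sum>A \<in> insert (Suc h) ` Iset h (j - 1). \<Prod>i\<in>A. m i) =
      m (Suc h) * Iset_sum m h (j - 1)"
    by (simp add: sum.reindex Iset_sum_def sum_distrib_left fresh cong: sum.cong)
  moreover have "Iset h j \<inter> insert (Suc h) ` Iset h (j - 1) = {}"
    using fresh by blast
  ultimately show ?thesis
    by (simp add: Iset_sum_def Iset_Suc sum.union_disjoint finite_Iset)
qed

lemma Ppoly_0: "Ppoly 0 m = [:m 0:]" and Qpoly_0: "Qpoly 0 m = 1"
  by (simp_all add: Ppoly_def Qpoly_def)

lemma Ppoly_Suc: "Ppoly (Suc l) m = smult (m (Suc l)) ([:0, 1:] * Ppoly l m) + Qpoly l m"
  and Qpoly_Suc: "Qpoly (Suc l) m = [:0, 1:] * Ppoly l m"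
  by (simp_all add: Ppoly_def Qpoly_def split_beta)

lemma coeff_Ppoly_Qpoly:
  "coeff (Ppoly l m) n = Iset_sum m l (2 * int n - int l) \<and>
   coeff (Qpoly l m) n = Iset_sum m l (2 * int n - int l - 1)"
proof (induction l arbitrary: n)
  case 0
  then show ?case by (cases n) (auto simp: Ppoly_0 Qpoly_0 Iset_sum_0)
next
  case (Suc l)
  show ?case
  proof (cases n)
    case 0
    then show ?thesis
      using Suc.IH by (auto simp: Ppoly_Suc Qpoly_Suc Iset_sum_Suc Iset_sum_eq_0 algebra_simps)
  next
    case (Suc n')
    have "int (Suc l) mod 2 = (2 * int n - int (Suc l)) mod 2"
      and "int (Suc l) mod 2 \<noteq> (2 * int n - int (Suc l) - 1) mod 2"
      and "2 * int n - int (Suc l) - 1 = 2 * int n' - int l"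
      and "2 * int n - int (Suc l) - 2 = 2 * int n' - int l - 1"
      using Suc by presburger+
    then show ?thesis using Suc Suc.IH
      by (simp add: Ppoly_Suc Qpoly_Suc Iset_sum_Suc algebra_simps)
  qed
qed

lemma Ppoly_eq_monom_sum:
  assumes "a + r \<le> c"
  shows "Ppoly (2 * a + r) m =
    [:0, 1:] ^ a * (\<Sum>j = 0..c. monom (Iset_sum m (2 * a + r) (2 * int j - int r)) j)"
    (is "_ = ?rhs")
proof (rule poly_eqI)
  fix n
  have "[:0, 1:] ^ a = monom (1::int) a" by (simp add: monom_altdef)
  then have "coeff ?rhs n =
      (if n < a \<or> n - a > c then 0 else Iset_sum m (2 * a + r) (2 * int (n - a) - int r))"
    by (simp add: coeff_monom_mult coeff_sum)
  then show "coeff (Ppoly (2 * a + r) m) n = coeff ?rhs n"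
    unfolding coeff_Ppoly_Qpoly[THEN conjunct1]
    using assms by (auto intro!: Iset_sum_eq_0 arg_cong[where f = "Iset_sum m _"])
qed

theorem lemma8:
  fixes k :: nat and m :: "nat \<Rightarrow> int"
  assumes "k \<ge> 1"
  shows "(Ppoly (2*k - 1) m =
           [:0, 1:] ^ (k - 1) *
           (\<Sum>j = 0..k. monom (\<Sum>A \<in> Iset (2*k - 1) (2 * int j - 1). \<Prod>i\<in>A. m i) j)) \<and>
         (Ppoly (2*k) m =
           [:0, 1:] ^ k *
           (\<Sum>j = 0..k. monom (\<Sum>A \<in> Iset (2*k) (2 * int j). \<Prod>i\<in>A. m i) j))"
proof -
  have "2 * k - 1 = 2 * (k - 1) + 1" using assms by simp
  then show ?thesis
    using Ppoly_eq_monom_sum[of "k - 1" 1 k m] Ppoly_eq_monom_sum[of k 0 k m] assms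
    by (simp add: Iset_sum_def)
qed

end
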